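(* Let $A\subset B(H)$ be an R$^*$-algebra with $\mathrm{id}_H\in A$, and let $p,q$ be projections in $A$. Then the projection onto $pH+qH$ belongs to $A$ and is the least upper bound $p\vee q$ of $p,q$ in the set $\mathcal{P}(A)$ of projections of $A$ (in particular $pH+qH$ is closed); the projection onto $pH\cap qH$ belongs to $A$ and is the greatest lower bound $p\wedge q$ in $\mathcal{P}(A)$; and $1-p$, the projection onto $(pH)^\perp$, belongs to $A$.
   Context: An R$^*$-algebra is a (not necessarily closed) $^*$-subalgebra $A$ of $B(H)$, $H$ a complex Hilbert space, such that for every $x\in A$ there exists $y\in A$ with $xyx=x$; equivalently, every self-adjoint operator in $A$ has finite spectrum. $\mathcal{P}(A)=\{p\in A: p=p^2=p^*\}$ is ordered by $p\le q$ iff $pq=p$ (i.e. $pH\subset qH$). *)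

theory Defs
  imports "HOL-Analysis.Analysis"
begin

class complex_vector = real_vector +
  fixes scaleC :: "complex \<Rightarrow> 'a \<Rightarrow> 'a" (infixr \<open>*\<^sub>C\<close> 75)
  assumes scaleC_add_right: "a *\<^sub>C (x + y) = a *\<^sub>C x + a *\<^sub>C y"
    and scaleC_add_left: "(a + b) *\<^sub>C x = a *\<^sub>C x + b *\<^sub>C x"
    and scaleC_scaleC: "a *\<^sub>C (b *\<^sub>C x) = (a * b) *\<^sub>C x"
    and scaleC_one: "1 *\<^sub>C x = x"
    and scaleC_of_real: "complex_of_real r *\<^sub>C x = r *\<^sub>R x"

class complex_inner = complex_vector + real_normed_vector +
  fixes cinner :: "'a \<Rightarrow> 'a \<Rightarrow> complex"
  assumes cinner_commute: "cinner x y = cnj (cinner y x)"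
    and cinner_add_left: "cinner (x + y) z = cinner x z + cinner y z"
    and cinner_scaleC_left: "cinner (a *\<^sub>C x) y = cnj a * cinner x y"
    and cinner_self_real: "Im (cinner x x) = 0"
    and cinner_self_nonneg: "0 \<le> Re (cinner x x)"
    and cinner_self_eq_zero: "cinner x x = 0 \<longleftrightarrow> x = 0"
    and norm_eq_sqrt_cinner: "norm x = sqrt (Re (cinner x x))"

class chilbert_space = complex_inner + complete_space

definition bounded_clinear :: "('a::complex_inner \<Rightarrow> 'a) \<Rightarrow> bool" where
  "bounded_clinear T \<longleftrightarrow>
     (\<forall>x y. T (x + y) = T x + T y) \<and> (\<forall>c x. T (c *\<^sub>C x) = c *\<^sub>C T x) \<and>
     (\<exists>K. \<forall>x. norm (T x) \<le> norm x * K)"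

definition adj :: "('a::complex_inner \<Rightarrow> 'a) \<Rightarrow> ('a \<Rightarrow> 'a)" where
  "adj T = (SOME S. \<forall>x y. cinner (T x) y = cinner x (S y))"

text \<open>A (not necessarily closed) *-subalgebra of B(H).\<close>
definition star_subalgebra :: "('a::chilbert_space \<Rightarrow> 'a) set \<Rightarrow> bool" where
  "star_subalgebra A \<longleftrightarrow>
     (\<forall>T\<in>A. bounded_clinear T) \<and> (\<lambda>x. 0) \<in> A \<and>
     (\<forall>S\<in>A. \<forall>T\<in>A. (\<lambda>x. S x + T x) \<in> A) \<and>
     (\<forall>c. \<forall>T\<in>A. (\<lambda>x. c *\<^sub>C T x) \<in> A) \<and>
     (\<forall>S\<in>A. \<forall>T\<in>A. S \<circ> T \<in> A) \<and>
     (\<forall>T\<in>A. adj T \<in> A)"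

definition R_star_algebra :: "('a::chilbert_space \<Rightarrow> 'a) set \<Rightarrow> bool" where
  "R_star_algebra A \<longleftrightarrow> star_subalgebra A \<and> (\<forall>x\<in>A. \<exists>y\<in>A. x \<circ> y \<circ> x = x)"

definition projections :: "('a::chilbert_space \<Rightarrow> 'a) set \<Rightarrow> ('a \<Rightarrow> 'a) set" where
  "projections A = {p \<in> A. p \<circ> p = p \<and> adj p = p}"

definition proj_le :: "('a \<Rightarrow> 'a) \<Rightarrow> ('a \<Rightarrow> 'a) \<Rightarrow> bool" where
  "proj_le p q \<longleftrightarrow> p \<circ> q = p"

definition orth_compl :: "'a::complex_inner set \<Rightarrow> 'a set" where
  "orth_compl M = {x. \<forall>y\<in>M. cinner y x = 0}"

end

theory Submission
  imports Defs
begin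

(* Every x in an R*-algebra has its range projection in the algebra: if y is an inner inverse
   of x^* x, then x y x^* is a self-adjoint idempotent with x y x^* x = x. The join of p and q
   is the range projection r of p + q. Its range lies in pH + qH, and since (p + q) w = 0 forces
   p w = q w = 0 (as <p w, w> = |p w|^2), the identity (p + q) r = p + q gives p r = p and
   q r = q, so r fixes pH + qH; in particular pH + qH is closed. The meet is
   1 - ((1 - p) join (1 - q)), whose range is the orthogonal complement of (1 - p)H + (1 - q)H.
   Adjoints of bounded operators, needed throughout, come from the Riesz representation
   theorem, proved via the point of least norm in a closed convex set. *)

section \<open>Complex inner product algebra\<close>

lemma scaleC_minus_one: "(-1::complex) *\<^sub>C x = - (x::'a::complex_vector)"
  using scaleC_of_real[of "-1" x] by simp

lemma cinner_add_right: "cinner z (x + y) = cinner z x + cinner (z::'a::complex_inner) y"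
  by (subst (1 2 3) cinner_commute) (simp add: cinner_add_left)

lemma cinner_scaleC_right: "cinner x (a *\<^sub>C y) = a * cinner (x::'a::complex_inner) y"
  by (subst (1 2) cinner_commute) (simp add: cinner_scaleC_left)

lemma cinner_zero_left [simp]: "cinner 0 (y::'a::complex_inner) = 0"
  using cinner_add_left[of "0::'a" 0 y] by simp

lemma cinner_zero_right [simp]: "cinner (y::'a::complex_inner) 0 = 0"
  using cinner_add_right[of y "0::'a" 0] by simp

lemma cinner_minus_left: "cinner (- x) y = - cinner (x::'a::complex_inner) y"
  using cinner_scaleC_left[of "-1" x y] by (simp add: scaleC_minus_one)

lemma cinner_minus_right: "cinner y (- x) = - cinner (y::'a::complex_inner) x"
  using cinner_scaleC_right[of y "-1" x] by (simp add: scaleC_minus_one)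

lemma cinner_diff_left: "cinner (x - y) z = cinner x z - cinner (y::'a::complex_inner) z"
  by (simp only: diff_conv_add_uminus cinner_add_left cinner_minus_left)

lemma cinner_diff_right: "cinner z (x - y) = cinner z x - cinner (z::'a::complex_inner) y"
  by (simp only: diff_conv_add_uminus cinner_add_right cinner_minus_right)

lemma cinner_scaleR_left: "cinner (r *\<^sub>R x) y = of_real r * cinner (x::'a::complex_inner) y"
  by (simp only: scaleC_of_real[symmetric] cinner_scaleC_left complex_cnj_complex_of_real)

lemma cinner_self_eq_norm_sq: "cinner x x = of_real ((norm (x::'a::complex_inner))\<^sup>2)"
  using cinner_self_real[of x] cinner_self_nonneg[of x] norm_eq_sqrt_cinner[of x]
  by (simp add: complex_eq_iff)

lemma cinner_ext_right:
  assumes "\<And>u. cinner u a = cinner u (b::'a::complex_inner)"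
  shows "a = b"
proof -
  have "cinner (a - b) (a - b) = 0"
    using assms[of "a - b"] by (simp add: cinner_diff_right)
  then show ?thesis by (simp add: cinner_self_eq_zero)
qed

lemma cinner_ext_left:
  assumes "\<And>u. cinner a u = cinner (b::'a::complex_inner) u"
  shows "a = b"
proof -
  have "cinner (a - b) (a - b) = 0"
    using assms[of "a - b"] by (simp add: cinner_diff_left)
  then show ?thesis by (simp add: cinner_self_eq_zero)
qed

lemma norm_add_sq:
  "(norm (a + b))\<^sup>2 = (norm a)\<^sup>2 + (norm b)\<^sup>2 + 2 * Re (cinner a (b::'a::complex_inner))"
proof -
  have "Re (cinner b a) = Re (cinner a b)"
    by (subst cinner_commute) simp
  moreover have "Re (cinner (a + b) (a + b))
      = Re (cinner a a) + Re (cinner a b) + Re (cinner b a) + Re (cinner b b)"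
    by (simp add: cinner_add_left cinner_add_right)
  ultimately show ?thesis
    by (simp add: cinner_self_eq_norm_sq)
qed

lemma parallelogram_law:
  "(norm (a + b))\<^sup>2 + (norm (a - b))\<^sup>2 = 2 * (norm a)\<^sup>2 + 2 * (norm (b::'a::complex_inner))\<^sup>2"
  using norm_add_sq[of a b] norm_add_sq[of a "- b"]
  by (simp add: cinner_minus_right)

lemma norm_scaleC: "norm (t *\<^sub>C w) = cmod t * norm (w::'a::complex_inner)"
proof -
  have "cinner (t *\<^sub>C w) (t *\<^sub>C w) = cnj t * t * cinner w w"
    by (simp add: cinner_scaleC_left cinner_scaleC_right)
  also have "cnj t * t = of_real ((cmod t)\<^sup>2)"
    using complex_norm_square[of t] by (simp add: mult.commute)
  finally have "of_real ((norm (t *\<^sub>C w))\<^sup>2) = (of_real ((cmod t * norm w)\<^sup>2) :: complex)"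
    by (simp only: cinner_self_eq_norm_sq of_real_mult power_mult_distrib)
  then have "(norm (t *\<^sub>C w))\<^sup>2 = (cmod t * norm w)\<^sup>2"
    by (simp only: of_real_eq_iff)
  then show ?thesis
    by (simp add: power2_eq_iff_nonneg)
qed

lemma cinner_Cauchy_Schwarz: "cmod (cinner x y) \<le> norm x * norm (y::'a::complex_inner)"
proof (cases "x = 0")
  case True
  then show ?thesis by simp
next
  case False
  define n where "n = (norm x)\<^sup>2"
  define c where "c = cinner x y"
  have n: "n > 0" using False by (simp add: n_def)
  \<comment> \<open>Expand \<open>\<parallel>y - (c/n) x\<parallel>\<^sup>2 \<ge> 0\<close>.\<close>
  define t where "t = c / of_real n"
  have "cinner (y - t *\<^sub>C x) (y - t *\<^sub>C x)
      = cinner y y - t * cinner y x - cnj t * cinner x y + cnj t * t * cinner x x"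
    by (simp add: cinner_diff_left cinner_diff_right cinner_scaleC_left cinner_scaleC_right
        algebra_simps)
  also have "\<dots> = of_real ((norm y)\<^sup>2) - t * cnj c - cnj t * c + cnj t * t * of_real n"
    by (simp add: cinner_self_eq_norm_sq n_def c_def cinner_commute[of y x])
  also have "\<dots> = of_real ((norm y)\<^sup>2) - c * cnj c / of_real n"
    using n by (simp add: t_def field_simps)
  also have "c * cnj c = of_real ((cmod c)\<^sup>2)"
    using complex_norm_square[of c] by simp
  finally have "cinner (y - t *\<^sub>C x) (y - t *\<^sub>C x) = of_real ((norm y)\<^sup>2 - (cmod c)\<^sup>2 / n)"
    by simp
  then have "(norm (y - t *\<^sub>C x))\<^sup>2 = (norm y)\<^sup>2 - (cmod c)\<^sup>2 / n"
    by (simp only: cinner_self_eq_norm_sq of_real_eq_iff)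
  then have "(cmod c)\<^sup>2 \<le> (norm y)\<^sup>2 * n"
    using n by (metis diff_ge_0_iff_ge pos_divide_le_eq zero_le_power2)
  then have "(cmod c)\<^sup>2 \<le> (norm x * norm y)\<^sup>2"
    by (simp add: n_def power_mult_distrib mult.commute)
  then show ?thesis
    unfolding c_def by (rule power2_le_imp_le) simp
qed

section \<open>Riesz representation\<close>

lemma convex_minimizing_sequence_Cauchy:
  fixes X :: "nat \<Rightarrow> 'a::complex_inner"
  assumes "convex C" and X_in: "\<And>n. X n \<in> C" and d_le: "\<And>x. x \<in> C \<Longrightarrow> d \<le> norm x"
    and "0 \<le> d" and X_norm: "\<And>n. (norm (X n))\<^sup>2 < d\<^sup>2 + 1 / real (Suc n)"
  shows "Cauchy X"
proof (rule CauchyI)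
  have dist_X: "(norm (X m - X n))\<^sup>2 < 2 / real (Suc m) + 2 / real (Suc n)" for m n
  proof -
    have "(1/2) *\<^sub>R X m + (1/2) *\<^sub>R X n \<in> C"
      using X_in by (intro convexD[OF \<open>convex C\<close>]) auto
    then have "2 * d \<le> norm (X m + X n)"
      using d_le by (fastforce simp: scaleR_add_right[symmetric])
    then have "(2 * d)\<^sup>2 \<le> (norm (X m + X n))\<^sup>2"
      using \<open>0 \<le> d\<close> by (intro power_mono) auto
    then show ?thesis
      using parallelogram_law[of "X m" "X n"] X_norm[of m] X_norm[of n]
      by (simp add: power_mult_distrib)
  qed
  fix e :: real
  assume "0 < e"
  then obtain M where M: "inverse (real (Suc M)) < e\<^sup>2 / 4"
    using reals_Archimedean[of "e\<^sup>2 / 4"] by auto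
  show "\<exists>M. \<forall>m\<ge>M. \<forall>n\<ge>M. norm (X m - X n) < e"
  proof (intro exI allI impI)
    fix m n
    assume "M \<le> m" "M \<le> n"
    then have "2 / real (Suc m) \<le> 2 / real (Suc M)" "2 / real (Suc n) \<le> 2 / real (Suc M)"
      by (simp_all add: frac_le)
    moreover have "2 / real (Suc M) < e\<^sup>2 / 2"
      using M by (simp add: field_simps)
    ultimately have "(norm (X m - X n))\<^sup>2 < e\<^sup>2"
      using dist_X[of m n] by linarith
    then show "norm (X m - X n) < e"
      using \<open>0 < e\<close> by (simp add: power_less_imp_less_base)
  qed
qed

lemma min_norm_point_exists:
  fixes C :: "'a::chilbert_space set"
  assumes "closed C" "convex C" "C \<noteq> {}"
  obtains x0 where "x0 \<in> C" "\<And>x. x \<in> C \<Longrightarrow> norm x0 \<le> norm x"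
proof -
  define d where "d = Inf (norm ` C)"
  have d_le: "d \<le> norm x" if "x \<in> C" for x
    unfolding d_def using that by (intro cInf_lower bdd_belowI[of _ 0]) auto
  have "0 \<le> d"
    unfolding d_def using \<open>C \<noteq> {}\<close> by (intro cInf_greatest) auto
  have "\<exists>x\<in>C. (norm x)\<^sup>2 < d\<^sup>2 + 1 / real (Suc n)" for n
  proof -
    have "d < sqrt (d\<^sup>2 + 1 / real (Suc n))"
      by (intro real_less_rsqrt) simp
    then obtain x where "x \<in> C" "norm x < sqrt (d\<^sup>2 + 1 / real (Suc n))"
      using cInf_lessD[of "norm ` C"] \<open>C \<noteq> {}\<close> unfolding d_def by blast
    then have "(norm x)\<^sup>2 < (sqrt (d\<^sup>2 + 1 / real (Suc n)))\<^sup>2"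
      by (intro power_strict_mono) auto
    then have "(norm x)\<^sup>2 < d\<^sup>2 + 1 / real (Suc n)"
      by simp
    with \<open>x \<in> C\<close> show ?thesis by blast
  qed
  then obtain X where X_in: "\<And>n. X n \<in> C" and X_norm: "\<And>n. (norm (X n))\<^sup>2 < d\<^sup>2 + 1 / real (Suc n)"
    by metis
  have "Cauchy X"
    using \<open>convex C\<close> X_in d_le \<open>0 \<le> d\<close> X_norm by (rule convex_minimizing_sequence_Cauchy)
  then obtain x0 where x0: "X \<longlonglongrightarrow> x0"
    using Cauchy_convergent convergent_def by blast
  have "x0 \<in> C"
    using \<open>closed C\<close> X_in x0 closed_sequentially by blast
  have "(norm x0)\<^sup>2 \<le> d\<^sup>2"
  proof (rule LIMSEQ_le)
    show "(\<lambda>n. (norm (X n))\<^sup>2) \<longlonglongrightarrow> (norm x0)\<^sup>2"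
      by (intro tendsto_intros x0)
    show "(\<lambda>n. d\<^sup>2 + inverse (real (Suc n))) \<longlonglongrightarrow> d\<^sup>2"
      using tendsto_add[OF tendsto_const LIMSEQ_inverse_real_of_nat, of "d\<^sup>2"] by simp
    show "\<exists>N. \<forall>n\<ge>N. (norm (X n))\<^sup>2 \<le> d\<^sup>2 + inverse (real (Suc n))"
      using X_norm by (auto simp: inverse_eq_divide less_imp_le)
  qed
  then have "norm x0 \<le> d"
    using \<open>0 \<le> d\<close> by (rule power2_le_imp_le)
  with \<open>x0 \<in> C\<close> d_le that show ?thesis
    by force
qed

lemma min_norm_orthogonal:
  fixes x0 w :: "'a::complex_inner"
  assumes min: "\<And>t. norm x0 \<le> norm (x0 + t *\<^sub>C w)"
  shows "cinner x0 w = 0"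
proof -
  define c where "c = cinner x0 w"
  define e where "e = 1 / ((norm w)\<^sup>2 + 1)"
  have "0 < (norm w)\<^sup>2 + 1"
    by (simp add: add_nonneg_pos)
  then have "0 < e" "e * (norm w)\<^sup>2 < 1"
    by (simp_all add: e_def field_simps)
  define t where "t = - (of_real e * cnj c)"
  have tc: "t * c = - of_real (e * (cmod c)\<^sup>2)"
    using complex_norm_square[of c] by (simp add: t_def mult.commute mult.left_commute)
  have t_norm: "cmod t = e * cmod c"
    using \<open>0 < e\<close> by (simp add: t_def norm_mult)
  have "(norm x0)\<^sup>2 \<le> (norm (x0 + t *\<^sub>C w))\<^sup>2"
    using min by (intro power_mono) auto
  also have "\<dots> = (norm x0)\<^sup>2 + (cmod t * norm w)\<^sup>2 + 2 * Re (t * c)"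
    by (simp add: norm_add_sq norm_scaleC cinner_scaleC_right c_def)
  also have "\<dots> = (norm x0)\<^sup>2 + (e * cmod c)\<^sup>2 * (norm w)\<^sup>2 - 2 * (e * (cmod c)\<^sup>2)"
    by (simp only: tc t_norm Re_complex_of_real) (simp add: power_mult_distrib)
  finally have "0 \<le> e * ((cmod c)\<^sup>2 * (e * (norm w)\<^sup>2 - 2))"
    by (simp add: algebra_simps power2_eq_square)
  then have "0 \<le> (cmod c)\<^sup>2 * (e * (norm w)\<^sup>2 - 2)"
    using \<open>0 < e\<close> by (simp add: zero_le_mult_iff)
  then have "(cmod c)\<^sup>2 \<le> 0"
    using \<open>e * (norm w)\<^sup>2 < 1\<close> by (smt (verit) mult_pos_neg zero_le_power2)
  then show ?thesis
    by (simp add: c_def)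
qed

lemma riesz_representation:
  fixes \<phi> :: "'a::chilbert_space \<Rightarrow> complex"
  assumes "bounded_linear \<phi>" and \<phi>_scaleC: "\<And>c x. \<phi> (c *\<^sub>C x) = c * \<phi> x"
  obtains z where "\<And>x. \<phi> x = cinner z x"
proof (cases "\<forall>x. \<phi> x = 0")
  case True
  then show ?thesis
    using that[of 0] by simp
next
  case False
  then obtain u where "\<phi> u \<noteq> 0" by blast
  interpret \<phi>: bounded_linear \<phi> by fact
  define C where "C = \<phi> -` {1}"
  have "closed C"
    unfolding C_def by (intro continuous_closed_vimage closed_singleton \<phi>.continuous) simp
  moreover have "convex C"
    unfolding C_def by (intro convex_linear_vimage \<phi>.linear convex_singleton)
  moreover have "(1 / \<phi> u) *\<^sub>C u \<in> C"
    using \<open>\<phi> u \<noteq> 0\<close> by (simp add: C_def \<phi>_scaleC)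
  ultimately obtain x0 where "x0 \<in> C" and x0_min: "\<And>x. x \<in> C \<Longrightarrow> norm x0 \<le> norm x"
    using min_norm_point_exists by blast
  have "\<phi> x0 = 1" "x0 \<noteq> 0"
    using \<open>x0 \<in> C\<close> by (auto simp: C_def)
  have x0_orth: "cinner x0 w = 0" if "\<phi> w = 0" for w
    using that \<open>\<phi> x0 = 1\<close>
    by (intro min_norm_orthogonal x0_min) (simp add: C_def \<phi>.add \<phi>_scaleC)
  have "\<phi> x = cinner ((1 / (norm x0)\<^sup>2) *\<^sub>R x0) x" for x
  proof -
    have "cinner x0 (x - \<phi> x *\<^sub>C x0) = 0"
      using \<open>\<phi> x0 = 1\<close> by (intro x0_orth) (simp add: \<phi>.diff \<phi>_scaleC)
    then have "cinner x0 x = \<phi> x * of_real ((norm x0)\<^sup>2)"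
      by (simp add: cinner_diff_right cinner_scaleC_right cinner_self_eq_norm_sq)
    then show ?thesis
      using \<open>x0 \<noteq> 0\<close> by (simp add: cinner_scaleR_left)
  qed
  then show ?thesis
    using that by blast
qed

section \<open>Adjoints\<close>

text \<open>Unlike \<open>adj\<close>, which is defined by \<open>SOME\<close>, the relation \<open>is_adj\<close> is meaningful
  without knowing that an adjoint exists.\<close>

definition is_adj :: "('a::complex_inner \<Rightarrow> 'a) \<Rightarrow> ('a \<Rightarrow> 'a) \<Rightarrow> bool" where
  "is_adj T S \<longleftrightarrow> (\<forall>x y. cinner (T x) y = cinner x (S y))"

lemma is_adjD: "is_adj T S \<Longrightarrow> cinner (T x) y = cinner x (S y)"
  unfolding is_adj_def by blast

lemma is_adj_sym: "is_adj T S \<Longrightarrow> is_adj S T"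
  unfolding is_adj_def by (metis cinner_commute)

lemma is_adj_unique: "is_adj T S \<Longrightarrow> is_adj T S' \<Longrightarrow> S = S'"
  by (rule ext, rule cinner_ext_right) (metis is_adjD)

lemma is_adj_comp: "is_adj T S \<Longrightarrow> is_adj T' S' \<Longrightarrow> is_adj (T \<circ> T') (S' \<circ> S)"
  by (simp add: is_adj_def)

lemma is_adj_ident: "is_adj (\<lambda>x. x) (\<lambda>x. x)"
  by (simp add: is_adj_def)

lemma is_adj_add:
  "is_adj T S \<Longrightarrow> is_adj T' S' \<Longrightarrow> is_adj (\<lambda>x. T x + T' x) (\<lambda>x. S x + S' x)"
  by (simp add: is_adj_def cinner_add_left cinner_add_right)

lemma is_adj_diff:
  "is_adj T S \<Longrightarrow> is_adj T' S' \<Longrightarrow> is_adj (\<lambda>x. T x - T' x) (\<lambda>x. S x - S' x)"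
  by (simp add: is_adj_def cinner_diff_left cinner_diff_right)

lemma is_adj_linear:
  assumes "is_adj T S"
  shows "linear T"
proof
  show "T (a + b) = T a + T b" for a b
    by (rule cinner_ext_left) (simp add: is_adjD[OF assms] cinner_add_left)
  show "T (r *\<^sub>R a) = r *\<^sub>R T a" for r a
    by (rule cinner_ext_left) (simp add: is_adjD[OF assms] cinner_scaleR_left)
qed

lemma adj_eqI:
  assumes "is_adj T S"
  shows "adj T = S"
proof -
  have "is_adj T (adj T)"
    using someI[of "\<lambda>S. \<forall>x y. cinner (T x) y = cinner x (S y)", of S] assms
    unfolding is_adj_def adj_def by blast
  then show ?thesis
    using assms by (rule is_adj_unique)
qed

lemma bounded_clinear_bounded_linear: "bounded_clinear T \<Longrightarrow> bounded_linear T"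
  unfolding bounded_clinear_def
  by (metis bounded_linear_intro scaleC_of_real)

lemma is_adj_adj:
  fixes T :: "'a::chilbert_space \<Rightarrow> 'a"
  assumes "bounded_clinear T"
  shows "is_adj T (adj T)"
proof -
  obtain K where T_add: "\<And>x y. T (x + y) = T x + T y" and T_scaleC: "\<And>c x. T (c *\<^sub>C x) = c *\<^sub>C T x"
    and T_bound: "\<And>x. norm (T x) \<le> norm x * K"
    using assms unfolding bounded_clinear_def by blast
  have "\<exists>z. \<forall>x. cinner y (T x) = cinner z x" for y
  proof -
    have "bounded_linear (\<lambda>x. cinner y (T x))"
    proof (rule bounded_linear_intro[where K = "norm y * K"])
      show "cinner y (T (x + x')) = cinner y (T x) + cinner y (T x')" for x x'
        by (simp add: T_add cinner_add_right)
      show "cinner y (T (r *\<^sub>R x)) = r *\<^sub>R cinner y (T x)" for r x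
        by (simp add: T_scaleC cinner_scaleC_right scaleR_conv_of_real flip: scaleC_of_real)
      show "cmod (cinner y (T x)) \<le> norm x * (norm y * K)" for x
        using cinner_Cauchy_Schwarz[of y "T x"] mult_left_mono[OF T_bound[of x], of "norm y"]
        by (simp add: algebra_simps)
    qed
    then show ?thesis
      by (rule riesz_representation) (auto simp: T_scaleC cinner_scaleC_right)
  qed
  then obtain S where "\<And>y x. cinner y (T x) = cinner (S y) x"
    by metis
  then have "is_adj T S"
    unfolding is_adj_def by (metis cinner_commute)
  then show ?thesis
    by (simp add: adj_eqI)
qed

section \<open>Orthogonal projections\<close>

definition is_orth_proj :: "('a::complex_inner \<Rightarrow> 'a) \<Rightarrow> bool" where
  "is_orth_proj p \<longleftrightarrow> is_adj p p \<and> p \<circ> p = p"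

lemma orth_proj_idem: "is_orth_proj p \<Longrightarrow> p (p x) = p x"
  unfolding is_orth_proj_def by (metis comp_apply)

lemma orth_proj_linear: "is_orth_proj p \<Longrightarrow> linear p"
  unfolding is_orth_proj_def by (blast intro: is_adj_linear)

lemma proj_le_selfadjoint_iff:
  assumes "is_adj p p" "is_adj r r"
  shows "proj_le p r \<longleftrightarrow> r \<circ> p = p"
proof
  assume "proj_le p r"
  then have "is_adj p (r \<circ> p)"
    using is_adj_comp[OF assms] unfolding proj_le_def by simp
  then show "r \<circ> p = p"
    using is_adj_unique[OF assms(1)] by metis
next
  assume "r \<circ> p = p"
  then have "is_adj p (p \<circ> r)"
    using is_adj_comp[OF assms(2,1)] by simp
  then show "proj_le p r"
    unfolding proj_le_def using is_adj_unique[OF assms(1)] by metis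
qed

lemma proj_le_orth_proj_iff:
  "is_orth_proj p \<Longrightarrow> is_orth_proj r \<Longrightarrow> proj_le p r \<longleftrightarrow> (\<forall>v. r (p v) = p v)"
  unfolding is_orth_proj_def by (simp add: proj_le_selfadjoint_iff fun_eq_iff)

lemma cinner_orth_proj: "is_orth_proj p \<Longrightarrow> cinner (p w) w = of_real ((norm (p w))\<^sup>2)"
  unfolding is_orth_proj_def
  by (metis cinner_self_eq_norm_sq comp_apply is_adjD)

lemma orth_proj_add_eq_zero:
  assumes "is_orth_proj p" "is_orth_proj q" "p w + q w = 0"
  shows "p w = 0" "q w = 0"
proof -
  have "cinner (p w) w + cinner (q w) w = 0"
    using assms(3) by (metis cinner_add_left cinner_zero_left)
  then have "(norm (p w))\<^sup>2 + (norm (q w))\<^sup>2 = 0"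
    by (simp only: cinner_orth_proj assms(1,2) of_real_add[symmetric] of_real_eq_0_iff)
  then show "p w = 0" "q w = 0"
    by (simp_all add: add_nonneg_eq_0_iff)
qed

lemma proj_le_of_sum_comp:
  assumes "is_orth_proj p" "is_orth_proj q" "(\<lambda>v. p v + q v) \<circ> r = (\<lambda>v. p v + q v)"
  shows "proj_le p r" "proj_le q r"
proof -
  have "p (v - r v) = 0 \<and> q (v - r v) = 0" for v
  proof -
    have "p (v - r v) + q (v - r v) = 0"
      using fun_cong[OF assms(3), of v]
      by (simp add: linear_diff[OF orth_proj_linear[OF assms(1)]]
          linear_diff[OF orth_proj_linear[OF assms(2)]] algebra_simps)
    then show ?thesis
      using orth_proj_add_eq_zero[OF assms(1,2)] by blast
  qed
  then show "proj_le p r" "proj_le q r"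
    by (simp_all add: proj_le_def fun_eq_iff linear_diff[OF orth_proj_linear] assms(1,2))
qed

lemma orth_proj_compl:
  assumes "is_orth_proj p"
  shows "is_orth_proj (\<lambda>x. x - p x)"
proof -
  have "is_adj (\<lambda>x. x - p x) (\<lambda>x. x - p x)"
    using assms unfolding is_orth_proj_def by (intro is_adj_diff is_adj_ident) simp
  moreover have "(v - p v) - p (v - p v) = v - p v" for v
    by (simp add: linear_diff[OF orth_proj_linear[OF assms]] orth_proj_idem[OF assms])
  ultimately show ?thesis
    unfolding is_orth_proj_def by (simp add: comp_def)
qed

lemma range_orth_proj_compl:
  assumes "is_orth_proj p"
  shows "range (\<lambda>x. x - p x) = orth_compl (range p)"
proof
  have "is_adj p p"
    using assms unfolding is_orth_proj_def by blast
  then have "cinner (p a) (u - p u) = 0" for a u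
    by (simp add: is_adjD linear_diff[OF orth_proj_linear[OF assms]] orth_proj_idem[OF assms])
  then show "range (\<lambda>x. x - p x) \<subseteq> orth_compl (range p)"
    unfolding orth_compl_def by blast
  show "orth_compl (range p) \<subseteq> range (\<lambda>x. x - p x)"
  proof
    fix z
    assume "z \<in> orth_compl (range p)"
    then have "cinner (p z) z = 0"
      unfolding orth_compl_def by blast
    then have "p z = 0"
      by (simp add: cinner_orth_proj[OF assms])
    then show "z \<in> range (\<lambda>x. x - p x)"
      by (metis diff_zero rangeI)
  qed
qed

lemma proj_le_compl:
  assumes "is_orth_proj p" "is_orth_proj s" "proj_le s p"
  shows "proj_le (\<lambda>x. x - p x) (\<lambda>x. x - s x)"
proof -
  have "p \<circ> s = s"
    using assms unfolding is_orth_proj_def by (simp add: proj_le_selfadjoint_iff)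
  then have "p (s v) = s v" for v
    by (metis comp_apply)
  then have "(v - s v) - p (v - s v) = v - p v" for v
    by (simp add: linear_diff[OF orth_proj_linear[OF assms(1)]])
  then show ?thesis
    unfolding proj_le_def comp_def by (rule ext)
qed

lemma orth_compl_sums:
  assumes "0 \<in> U" "0 \<in> V"
  shows "orth_compl {x + y |x y. x \<in> U \<and> y \<in> V} = orth_compl U \<inter> orth_compl V"
proof
  have "U \<subseteq> {x + y |x y. x \<in> U \<and> y \<in> V}" "V \<subseteq> {x + y |x y. x \<in> U \<and> y \<in> V}"
    using assms by force+
  then show "orth_compl {x + y |x y. x \<in> U \<and> y \<in> V} \<subseteq> orth_compl U \<inter> orth_compl V"
    unfolding orth_compl_def by blast
  show "orth_compl U \<inter> orth_compl V \<subseteq> orth_compl {x + y |x y. x \<in> U \<and> y \<in> V}"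
    unfolding orth_compl_def by (auto simp: cinner_add_left)
qed

lemma closed_range_idempotent:
  fixes p :: "'a::t2_space \<Rightarrow> 'a"
  assumes "continuous_on UNIV p" "p \<circ> p = p"
  shows "closed (range p)"
proof -
  have "range p = {x. p x = x}"
    using assms(2) by (auto simp: fun_eq_iff) (metis rangeI)
  then show ?thesis
    using closed_Collect_eq[OF assms(1) continuous_on_id] by simp
qed

section \<open>Projections in an R*-algebra\<close>

lemma R_star_algebra_bounded_clinear: "R_star_algebra A \<Longrightarrow> T \<in> A \<Longrightarrow> bounded_clinear T"
  unfolding R_star_algebra_def star_subalgebra_def by blast

lemma R_star_algebra_adj_closed: "R_star_algebra A \<Longrightarrow> T \<in> A \<Longrightarrow> adj T \<in> A"
  unfolding R_star_algebra_def star_subalgebra_def by blast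

lemma R_star_algebra_comp_closed: "R_star_algebra A \<Longrightarrow> S \<in> A \<Longrightarrow> T \<in> A \<Longrightarrow> S \<circ> T \<in> A"
  unfolding R_star_algebra_def star_subalgebra_def by blast

lemma R_star_algebra_add_closed:
  "R_star_algebra A \<Longrightarrow> S \<in> A \<Longrightarrow> T \<in> A \<Longrightarrow> (\<lambda>x. S x + T x) \<in> A"
  unfolding R_star_algebra_def star_subalgebra_def by blast

lemma R_star_algebra_scaleC_closed: "R_star_algebra A \<Longrightarrow> T \<in> A \<Longrightarrow> (\<lambda>x. c *\<^sub>C T x) \<in> A"
  unfolding R_star_algebra_def star_subalgebra_def by blast

lemma R_star_algebra_is_adj: "R_star_algebra A \<Longrightarrow> T \<in> A \<Longrightarrow> is_adj T (adj T)"
  by (intro is_adj_adj R_star_algebra_bounded_clinear)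

lemma projections_iff:
  assumes "R_star_algebra A"
  shows "p \<in> projections A \<longleftrightarrow> p \<in> A \<and> is_orth_proj p"
  unfolding projections_def is_orth_proj_def
  using R_star_algebra_is_adj[OF assms] adj_eqI by fastforce

lemma R_star_algebra_compl_projection:
  assumes "R_star_algebra A" "id \<in> A" "p \<in> projections A"
  shows "(\<lambda>x. x - p x) \<in> projections A"
proof -
  have "(\<lambda>x. id x + (-1) *\<^sub>C p x) \<in> A"
    using assms by (intro R_star_algebra_add_closed R_star_algebra_scaleC_closed) (auto simp: projections_iff id_def)
  then show ?thesis
    using assms by (simp add: projections_iff scaleC_minus_one orth_proj_compl)
qed

lemma is_adj_cancel:
  assumes "is_adj x xs" "xs \<circ> x \<circ> f = xs \<circ> x"
  shows "x \<circ> f = x"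
proof
  fix v
  define w where "w = x (f v) - x v"
  have "xs w = 0"
    using fun_cong[OF assms(2), of v]
    by (simp add: w_def linear_diff[OF is_adj_linear[OF is_adj_sym[OF assms(1)]]])
  moreover have "w = x (f v - v)"
    by (simp add: w_def linear_diff[OF is_adj_linear[OF assms(1)]])
  ultimately have "cinner w w = 0"
    by (metis assms(1) cinner_zero_right is_adjD)
  then show "(x \<circ> f) v = x v"
    by (simp add: w_def cinner_self_eq_zero)
qed

lemma generalized_inverse_adj:
  assumes "is_adj a a" "is_adj y ys" "a \<circ> y \<circ> a = a"
  shows "a \<circ> ys \<circ> a = a"
proof (intro ext cinner_ext_left)
  fix v u
  have "cinner (a (ys (a v))) u = cinner v (a (y (a u)))"
    using assms(1) is_adj_sym[OF assms(2)] by (simp add: is_adjD)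
  also have "\<dots> = cinner (a v) u"
    using fun_cong[OF assms(3), of u] assms(1) by (simp add: is_adjD)
  finally show "cinner ((a \<circ> ys \<circ> a) v) u = cinner (a v) u"
    by simp
qed

lemma selfadjoint_if_adj_comp_eq:
  assumes "is_adj P P'" "P' \<circ> P = P"
  shows "is_adj P P"
  unfolding is_adj_def
proof (intro allI)
  fix u v
  have P'P: "P' (P w) = P w" for w
    using fun_cong[OF assms(2), of w] by simp
  have "cinner (P u) v = cinner (P u) (P v)"
    using assms(1) is_adj_sym[OF assms(1)] by (metis P'P is_adjD)
  also have "\<dots> = cinner u (P v)"
    using assms(1) by (metis P'P is_adjD)
  finally show "cinner (P u) v = cinner u (P v)" .
qed

text \<open>Here \<open>y\<close> is an inner inverse of \<open>x\<^sup>* x\<close> rather than of \<open>x\<close>: only this makes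
  \<open>x y x\<^sup>*\<close> self-adjoint.\<close>

lemma R_star_algebra_range_projection:
  assumes RA: "R_star_algebra A" and "x \<in> A"
  obtains y where "y \<in> A" "x \<circ> y \<circ> adj x \<in> projections A" "x \<circ> y \<circ> adj x \<circ> x = x"
proof -
  define xs where "xs = adj x"
  have "xs \<in> A" "is_adj x xs"
    unfolding xs_def using RA \<open>x \<in> A\<close> by (simp_all add: R_star_algebra_adj_closed R_star_algebra_is_adj)
  have "xs \<circ> x \<in> A"
    using RA \<open>xs \<in> A\<close> \<open>x \<in> A\<close> by (rule R_star_algebra_comp_closed)
  then obtain y where "y \<in> A" and y_inv: "(xs \<circ> x) \<circ> y \<circ> (xs \<circ> x) = xs \<circ> x"
    using RA unfolding R_star_algebra_def by blast
  define ys where "ys = adj y"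
  have "is_adj y ys"
    unfolding ys_def using RA \<open>y \<in> A\<close> by (rule R_star_algebra_is_adj)
  have "is_adj (xs \<circ> x) (xs \<circ> x)"
    using is_adj_comp[OF is_adj_sym[OF \<open>is_adj x xs\<close>] \<open>is_adj x xs\<close>] .
  then have ys_inv: "(xs \<circ> x) \<circ> ys \<circ> (xs \<circ> x) = xs \<circ> x"
    using \<open>is_adj y ys\<close> y_inv by (rule generalized_inverse_adj)
  have P_x: "x \<circ> (y \<circ> xs \<circ> x) = x"
    using \<open>is_adj x xs\<close> by (rule is_adj_cancel) (use y_inv in \<open>simp add: comp_assoc\<close>)
  have P'_x: "x \<circ> (ys \<circ> xs \<circ> x) = x"
    using \<open>is_adj x xs\<close> by (rule is_adj_cancel) (use ys_inv in \<open>simp add: comp_assoc\<close>)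
  have "is_adj (x \<circ> y \<circ> xs) (x \<circ> ys \<circ> xs)"
    using is_adj_comp[OF is_adj_comp[OF \<open>is_adj x xs\<close> \<open>is_adj y ys\<close>] is_adj_sym[OF \<open>is_adj x xs\<close>]]
    by (simp add: comp_assoc)
  moreover have "(x \<circ> ys \<circ> xs) \<circ> (x \<circ> y \<circ> xs) = x \<circ> y \<circ> xs"
    using P'_x by (metis comp_assoc)
  ultimately have "is_adj (x \<circ> y \<circ> xs) (x \<circ> y \<circ> xs)"
    by (rule selfadjoint_if_adj_comp_eq)
  moreover have "(x \<circ> y \<circ> xs) \<circ> (x \<circ> y \<circ> xs) = x \<circ> y \<circ> xs"
    using P_x by (metis comp_assoc)
  moreover have "x \<circ> y \<circ> xs \<in> A"
    using RA \<open>x \<in> A\<close> \<open>y \<in> A\<close> \<open>xs \<in> A\<close> by (intro R_star_algebra_comp_closed)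
  ultimately show ?thesis
    using that \<open>y \<in> A\<close> P_x RA unfolding xs_def
    by (simp add: projections_iff is_orth_proj_def comp_assoc)
qed

text \<open>The join of \<open>p\<close> and \<open>q\<close> is the range projection of \<open>p + q\<close>.\<close>

lemma R_star_algebra_join:
  assumes RA: "R_star_algebra A" and "p \<in> projections A" "q \<in> projections A"
  obtains r where "r \<in> projections A" "range r = {x + y |x y. x \<in> range p \<and> y \<in> range q}"
    "proj_le p r" "proj_le q r"
    "\<And>s. s \<in> projections A \<Longrightarrow> proj_le p s \<Longrightarrow> proj_le q s \<Longrightarrow> proj_le r s"
proof -
  have p: "p \<in> A" "is_orth_proj p" and q: "q \<in> A" "is_orth_proj q"
    using assms by (simp_all add: projections_iff)
  define x where "x = (\<lambda>v. p v + q v)"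
  have "x \<in> A"
    unfolding x_def using RA p q by (intro R_star_algebra_add_closed)
  have "is_adj x x"
    unfolding x_def using p q by (intro is_adj_add) (simp_all add: is_orth_proj_def)
  then obtain y where "y \<in> A" "x \<circ> y \<circ> x \<in> projections A" "x \<circ> y \<circ> x \<circ> x = x"
    using R_star_algebra_range_projection[OF RA \<open>x \<in> A\<close>] by (metis adj_eqI)
  define r where "r = x \<circ> y \<circ> x"
  have r: "r \<in> projections A" "is_orth_proj r" and "r \<circ> x = x"
    using RA \<open>x \<circ> y \<circ> x \<in> projections A\<close> \<open>x \<circ> y \<circ> x \<circ> x = x\<close> by (simp_all add: r_def projections_iff)
  then have "x \<circ> r = x"
    using proj_le_selfadjoint_iff[OF \<open>is_adj x x\<close>, of r] by (simp add: is_orth_proj_def proj_le_def)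
  then have "proj_le p r" "proj_le q r"
    using proj_le_of_sum_comp[OF p(2) q(2)] by (simp_all add: x_def)
  then have r_fixes: "r (p v) = p v" "r (q v) = q v" for v
    using p(2) q(2) r(2) by (simp_all add: proj_le_orth_proj_iff)
  have "range r = {x + y |x y. x \<in> range p \<and> y \<in> range q}"
  proof
    show "range r \<subseteq> {x + y |x y. x \<in> range p \<and> y \<in> range q}"
      by (auto simp: r_def x_def)
    have "p a + q b = r (p a + q b)" for a b
      using r_fixes by (simp add: linear_add[OF orth_proj_linear[OF r(2)]])
    then show "{x + y |x y. x \<in> range p \<and> y \<in> range q} \<subseteq> range r"
      by (auto intro: range_eqI)
  qed
  moreover have "proj_le r s"
    if s: "s \<in> projections A" "proj_le p s" "proj_le q s" for s
  proof -
    have "is_orth_proj s"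
      using RA s(1) by (simp add: projections_iff)
    then have "s (x v) = x v" for v
      using s p(2) q(2) by (simp add: x_def proj_le_orth_proj_iff linear_add[OF orth_proj_linear])
    then show "proj_le r s"
      using r(2) \<open>is_orth_proj s\<close> by (simp add: proj_le_orth_proj_iff r_def)
  qed
  ultimately show ?thesis
    using that r(1) \<open>proj_le p r\<close> \<open>proj_le q r\<close> by blast
qed

text \<open>The meet is obtained from the join by De Morgan: \<open>p \<and> q = 1 - ((1 - p) \<or> (1 - q))\<close>.\<close>

lemma R_star_algebra_meet:
  assumes RA: "R_star_algebra A" and "id \<in> A" and "p \<in> projections A" "q \<in> projections A"
  obtains r where "r \<in> projections A" "range r = range p \<inter> range q" "proj_le r p" "proj_le r q"
    "\<And>s. s \<in> projections A \<Longrightarrow> proj_le s p \<Longrightarrow> proj_le s q \<Longrightarrow> proj_le s r"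
proof -
  define p' where "p' = (\<lambda>x. x - p x)"
  define q' where "q' = (\<lambda>x. x - q x)"
  have "p' \<in> projections A" "q' \<in> projections A"
    unfolding p'_def q'_def using assms by (simp_all add: R_star_algebra_compl_projection)
  then obtain J where "J \<in> projections A" and J_range: "range J = {x + y |x y. x \<in> range p' \<and> y \<in> range q'}"
    and "proj_le p' J" "proj_le q' J"
    and J_least: "\<And>s. s \<in> projections A \<Longrightarrow> proj_le p' s \<Longrightarrow> proj_le q' s \<Longrightarrow> proj_le J s"
    using R_star_algebra_join[OF RA] by blast
  have orth_projs: "is_orth_proj p" "is_orth_proj q" "is_orth_proj p'" "is_orth_proj q'" "is_orth_proj J"
    using RA assms(3,4) \<open>p' \<in> projections A\<close> \<open>q' \<in> projections A\<close> \<open>J \<in> projections A\<close>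
    by (simp_all add: projections_iff)
  define r where "r = (\<lambda>x. x - J x)"
  have "r \<in> projections A"
    unfolding r_def using RA \<open>id \<in> A\<close> \<open>J \<in> projections A\<close> by (rule R_star_algebra_compl_projection)
  have "0 \<in> range p'" "0 \<in> range q'"
    using linear_0[OF orth_proj_linear[OF orth_projs(3)]] linear_0[OF orth_proj_linear[OF orth_projs(4)]]
    by (metis rangeI)+
  then have "range r = orth_compl (range p') \<inter> orth_compl (range q')"
    unfolding r_def range_orth_proj_compl[OF orth_projs(5)] J_range by (rule orth_compl_sums)
  also have "\<dots> = range p \<inter> range q"
    using range_orth_proj_compl[OF orth_projs(3)] range_orth_proj_compl[OF orth_projs(4)]
    by (simp add: p'_def q'_def)
  finally have "range r = range p \<inter> range q" .
  moreover have "proj_le r p" "proj_le r q"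
    using proj_le_compl[OF orth_projs(5,3) \<open>proj_le p' J\<close>] proj_le_compl[OF orth_projs(5,4) \<open>proj_le q' J\<close>]
    by (simp_all add: r_def p'_def q'_def)
  moreover have "proj_le s r"
    if s: "s \<in> projections A" "proj_le s p" "proj_le s q" for s
  proof -
    have "is_orth_proj s"
      using RA s(1) by (simp add: projections_iff)
    have "(\<lambda>x. x - s x) \<in> projections A"
      using RA \<open>id \<in> A\<close> s(1) by (rule R_star_algebra_compl_projection)
    moreover have "proj_le p' (\<lambda>x. x - s x)" "proj_le q' (\<lambda>x. x - s x)"
      unfolding p'_def q'_def using orth_projs(1,2) \<open>is_orth_proj s\<close> s(2,3) by (simp_all add: proj_le_compl)
    ultimately have "proj_le J (\<lambda>x. x - s x)"
      by (rule J_least)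
    then show "proj_le s r"
      using proj_le_compl[OF orth_proj_compl[OF \<open>is_orth_proj s\<close>] orth_projs(5)] by (simp add: r_def)
  qed
  ultimately show ?thesis
    using that \<open>r \<in> projections A\<close> by blast
qed

theorem proposition4p1:
  fixes A :: "('a::chilbert_space \<Rightarrow> 'a) set" and p q :: "'a \<Rightarrow> 'a"
  assumes "R_star_algebra A" and "id \<in> A"
    and "p \<in> projections A" and "q \<in> projections A"
  shows "(\<exists>r\<in>projections A. range r = {x + y |x y. x \<in> range p \<and> y \<in> range q}
            \<and> proj_le p r \<and> proj_le q r
            \<and> (\<forall>s\<in>projections A. proj_le p s \<and> proj_le q s \<longrightarrow> proj_le r s))
       \<and> closed {x + y |x y. x \<in> range p \<and> y \<in> range q}
       \<and> (\<exists>r\<in>projections A. range r = range p \<inter> range q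
            \<and> proj_le r p \<and> proj_le r q
            \<and> (\<forall>s\<in>projections A. proj_le s p \<and> proj_le s q \<longrightarrow> proj_le s r))
       \<and> (\<lambda>x. x - p x) \<in> projections A \<and> range (\<lambda>x. x - p x) = orth_compl (range p)"
proof (intro conjI)
  obtain r where r: "r \<in> projections A" "range r = {x + y |x y. x \<in> range p \<and> y \<in> range q}"
    "proj_le p r" "proj_le q r" "\<And>s. s \<in> projections A \<Longrightarrow> proj_le p s \<Longrightarrow> proj_le q s \<Longrightarrow> proj_le r s"
    using R_star_algebra_join[OF assms(1,3,4)] by blast
  then show "\<exists>r\<in>projections A. range r = {x + y |x y. x \<in> range p \<and> y \<in> range q}
      \<and> proj_le p r \<and> proj_le q r \<and> (\<forall>s\<in>projections A. proj_le p s \<and> proj_le q s \<longrightarrow> proj_le r s)"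
    by blast
  have "closed (range r)"
    using assms(1) r(1)
    by (intro closed_range_idempotent linear_continuous_on bounded_clinear_bounded_linear)
       (simp_all add: projections_def R_star_algebra_bounded_clinear)
  then show "closed {x + y |x y. x \<in> range p \<and> y \<in> range q}"
    by (simp only: r(2))
  obtain r' where "r' \<in> projections A" "range r' = range p \<inter> range q" "proj_le r' p" "proj_le r' q"
    "\<And>s. s \<in> projections A \<Longrightarrow> proj_le s p \<Longrightarrow> proj_le s q \<Longrightarrow> proj_le s r'"
    using R_star_algebra_meet[OF assms] by blast
  then show "\<exists>r\<in>projections A. range r = range p \<inter> range q
      \<and> proj_le r p \<and> proj_le r q \<and> (\<forall>s\<in>projections A. proj_le s p \<and> proj_le s q \<longrightarrow> proj_le s r)"
    by blast
  show "(\<lambda>x. x - p x) \<in> projections A"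
    using assms(1-3) by (rule R_star_algebra_compl_projection)
  show "range (\<lambda>x. x - p x) = orth_compl (range p)"
    using assms(1,3) by (simp add: projections_iff range_orth_proj_compl)
qed

end
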